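(* Let $A^!=T(A_1^* )/(R^\perp)$ be the quadratic dual of $A=A_k$, where $R=\operatorname{span}(r_1,\dots,r_7)\subset A_1\otimes A_1$. Identify $A^!_1=A_1^*$ with $\operatorname{Im}\mathbb{O}_k$ by letting the basis of $A_1^*$ dual to $x_1,\dots,x_7$ correspond to $o_1,\dots,o_7$. Then there are identifications $A^!_2=\operatorname{Im}\mathbb{O}_k$ and $A^!_3=k$ such that (1) the multiplication $A^!_1\times A^!_1\to A^!_2$ is $(u,v)\mapsto \operatorname{Im}(uv)$; (2) the multiplication $A^!_1\times A^!_1\times A^!_1\to A^!_3$ is $(u,v,w)\mapsto -\operatorname{Re}(uvw)$; and (3) $(A^!)^*\cong A^!$ as $A^!$-bimodules, i.e. $A^!$ is a symmetric Frobenius algebra.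
   Context: Let $k$ be a field of characteristic $\ne 2$. Label the points of the Fano plane by $1,\dots,7$ so that its directed lines are $123,145,167,246,275,374,365$. For $i,j,l$ put $\varepsilon^{ijl}=1$ if $(i,j,l)$ is a cyclic rotation of a directed line, $-1$ if $(j,i,l)$ is, and $0$ otherwise. $A_k=k\langle x_1,\dots,x_7\rangle/(r_1,\dots,r_7)$ with $\deg x_i=1$ and $r_i=\sum_{m,n}\varepsilon^{imn}x_mx_n$. The octonion algebra $\mathbb{O}_k$ is the unital non-associative $k$-algebra with basis $1,o_1,\dots,o_7$ and $o_ro_s=\sum_{i}\varepsilon^{rsi}o_i-\delta_{rs}$; $\operatorname{Im}\mathbb{O}_k=\operatorname{span}(o_1,\dots,o_7)$; conjugation $u\mapsto\bar u$ is the linear map fixing $1$ and negating each $o_i$; $\operatorname{Re}(u)=\tfrac12(u+\bar u)\in k$, $\operatorname{Im}(u)=\tfrac12(u-\bar u)$. In $\mathbb{O}_k$, products of three imaginary octonions are associative in the sense that $\operatorname{Re}((uv)w)=\operatorname{Re}(u(vw))$, so $\operatorname{Re}(uvw)$ is unambiguous. A graded algebra is symmetric Frobenius if it is finite-dimensional and isomorphic to its linear dual as a bimodule. *)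

theory Defs
  imports Main
begin

definition fano_lines :: "(nat \<times> nat \<times> nat) list" where
  "fano_lines = [(1,2,3),(1,4,5),(1,6,7),(2,4,6),(2,7,5),(3,7,4),(3,6,5)]"

definition directed :: "nat \<Rightarrow> nat \<Rightarrow> nat \<Rightarrow> bool" where
  "directed i j l \<longleftrightarrow> (i,j,l) \<in> set fano_lines \<or> (j,l,i) \<in> set fano_lines \<or> (l,i,j) \<in> set fano_lines"

definition eps :: "nat \<Rightarrow> nat \<Rightarrow> nat \<Rightarrow> int" where
  "eps i j l = (if directed i j l then 1 else if directed j i l then -1 else 0)"

definition vadd :: "('b \<Rightarrow> 'k::field) \<Rightarrow> ('b \<Rightarrow> 'k) \<Rightarrow> 'b \<Rightarrow> 'k" where
  "vadd f g = (\<lambda>w. f w + g w)"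

definition vsc :: "'k::field \<Rightarrow> ('b \<Rightarrow> 'k) \<Rightarrow> 'b \<Rightarrow> 'k" where
  "vsc c f = (\<lambda>w. c * f w)"

definition lin_on :: "('b \<Rightarrow> 'k::field) set \<Rightarrow> (('b \<Rightarrow> 'k) \<Rightarrow> ('c \<Rightarrow> 'k)) \<Rightarrow> bool" where
  "lin_on S F \<longleftrightarrow> (\<forall>x\<in>S. \<forall>y\<in>S. F (vadd x y) = vadd (F x) (F y)) \<and>
                  (\<forall>c. \<forall>x\<in>S. F (vsc c x) = vsc c (F x))"

definition lin_on_scalar :: "('b \<Rightarrow> 'k::field) set \<Rightarrow> (('b \<Rightarrow> 'k) \<Rightarrow> 'k) \<Rightarrow> bool" where
  "lin_on_scalar S F \<longleftrightarrow> (\<forall>x\<in>S. \<forall>y\<in>S. F (vadd x y) = F x + F y) \<and>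
                  (\<forall>c. \<forall>x\<in>S. F (vsc c x) = c * F x)"

section \<open>Octonions: u :: nat => k, u 0 = real part, u i = coefficient of o_i (1 <= i <= 7)\<close>

definition octs :: "(nat \<Rightarrow> 'k::field) set" where
  "octs = {u. \<forall>i>7. u i = 0}"

definition im_octs :: "(nat \<Rightarrow> 'k::field) set" where
  "im_octs = {u \<in> octs. u 0 = 0}"

definition omult :: "(nat \<Rightarrow> 'k::field) \<Rightarrow> (nat \<Rightarrow> 'k) \<Rightarrow> nat \<Rightarrow> 'k" where
  "omult u v = (\<lambda>i. if i = 0 then u 0 * v 0 - (\<Sum>r=1..7. u r * v r)
                    else if i \<le> 7 then u 0 * v i + u i * v 0
                         + (\<Sum>r=1..7. \<Sum>s=1..7. of_int (eps r s i) * u r * v s)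
                    else 0)"

definition oconj :: "(nat \<Rightarrow> 'k::field) \<Rightarrow> nat \<Rightarrow> 'k" where
  "oconj u = (\<lambda>i. if i = 0 then u 0 else - u i)"

definition ore :: "(nat \<Rightarrow> 'k::field) \<Rightarrow> 'k" where
  "ore u = (vadd u (oconj u)) 0 / 2"

definition oim :: "(nat \<Rightarrow> 'k::field) \<Rightarrow> nat \<Rightarrow> 'k" where
  "oim u = vsc (1/2) (vadd u (vsc (-1) (oconj u)))"

text \<open>t w is the coefficient of xi_{w_1} (x) ... (x) xi_{w_n}, where xi_i is dual to x_i.\<close>

definition tens :: "(nat list \<Rightarrow> 'k::field) set" where
  "tens = {f. finite {w. f w \<noteq> 0} \<and> (\<forall>w. f w \<noteq> 0 \<longrightarrow> set w \<subseteq> {1..7})}"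

definition thom :: "nat \<Rightarrow> (nat list \<Rightarrow> 'k::field) set" where
  "thom n = {f \<in> tens. \<forall>w. f w \<noteq> 0 \<longrightarrow> length w = n}"

definition tmul :: "(nat list \<Rightarrow> 'k::field) \<Rightarrow> (nat list \<Rightarrow> 'k) \<Rightarrow> nat list \<Rightarrow> 'k" where
  "tmul f g = (\<lambda>w. \<Sum>i\<le>length w. f (take i w) * g (drop i w))"

text \<open>R^perp: elements of A_1^* (x) A_1^* annihilating R = span(r_1..r_7),
  with r_i = sum_{m,n} eps^{imn} x_m x_n.\<close>
definition Rperp :: "(nat list \<Rightarrow> 'k::field) set" where
  "Rperp = {s \<in> thom 2. \<forall>i\<in>{1..7}.
             (\<Sum>m=1..7. \<Sum>n=1..7. of_int (eps i m n) * s [m, n]) = 0}"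

inductive_set dual_ideal :: "(nat list \<Rightarrow> 'k::field) set" where
  zero: "(\<lambda>_. 0) \<in> dual_ideal"
| gen: "a \<in> tens \<Longrightarrow> s \<in> Rperp \<Longrightarrow> b \<in> tens \<Longrightarrow> tmul (tmul a s) b \<in> dual_ideal"
| add: "x \<in> dual_ideal \<Longrightarrow> y \<in> dual_ideal \<Longrightarrow> vadd x y \<in> dual_ideal"
| scale: "x \<in> dual_ideal \<Longrightarrow> vsc c x \<in> dual_ideal"

text \<open>Identification A^!_1 = A_1^* with Im O: xi_i corresponds to o_i.\<close>
definition to_oct :: "(nat list \<Rightarrow> 'k::field) \<Rightarrow> nat \<Rightarrow> 'k" where
  "to_oct u = (\<lambda>i. if 1 \<le> i \<and> i \<le> 7 then u [i] else 0)"

text \<open>(A^!)^*: linear functionals on T vanishing on I (normalised to 0 outside T).\<close>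
definition dual_space :: "((nat list \<Rightarrow> 'k::field) \<Rightarrow> 'k) set" where
  "dual_space = {f. lin_on_scalar tens f \<and> (\<forall>x\<in>dual_ideal. f x = 0) \<and> (\<forall>x. x \<notin> tens \<longrightarrow> f x = 0)}"

definition dual_act :: "(nat list \<Rightarrow> 'k::field) \<Rightarrow> ((nat list \<Rightarrow> 'k) \<Rightarrow> 'k) \<Rightarrow> (nat list \<Rightarrow> 'k)
                        \<Rightarrow> (nat list \<Rightarrow> 'k) \<Rightarrow> 'k" where
  "dual_act a f b = (\<lambda>t. if t \<in> tens then f (tmul (tmul b t) a) else 0)"

definition symmetric_frobenius_dual :: "'k::field itself \<Rightarrow> bool" where
  "symmetric_frobenius_dual _ \<longleftrightarrow>
     (\<exists>B :: (nat list \<Rightarrow> 'k) set. finite B \<and> B \<subseteq> tens \<and>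
        (\<forall>x\<in>tens. \<exists>c. vadd x (vsc (-1) (\<lambda>w. \<Sum>b\<in>B. c b * b w)) \<in> dual_ideal)) \<and>
     (\<exists>Phi :: (nat list \<Rightarrow> 'k) \<Rightarrow> ((nat list \<Rightarrow> 'k) \<Rightarrow> 'k).
        lin_on tens Phi \<and> Phi ` tens = dual_space \<and>
        (\<forall>x\<in>tens. Phi x = (\<lambda>_. 0) \<longleftrightarrow> x \<in> dual_ideal) \<and>
        (\<forall>a\<in>tens. \<forall>x\<in>tens. \<forall>b\<in>tens. Phi (tmul (tmul a x) b) = dual_act a (Phi x) b))"

end

theory Submission
  imports Defs
begin

text \<open>
  \<open>A\<^sup>!\<close> is the tensor algebra on seven letters modulo the ideal generated by \<open>R\<^sup>\<bottom>\<close>, and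
  \<open>R\<^sup>\<bottom>\<close> is the kernel on quadratic tensors of \<open>coord2 x = (\<lambda>i. \<Sum>r s. eps r s i * x [r, s])\<close>.
  So \<open>coord2\<close> identifies \<open>A\<^sup>!\<^sub>2\<close> with the imaginary octonions, and on a product of two
  letters it is the imaginary part of the octonion product by the very definition of the latter.

  A cubic word \<open>[a, b, c]\<close> can be reduced through \<open>[a, b]\<close> or through \<open>[b, c]\<close>. Since two
  points of the Fano plane lie on a unique line, comparing the two reductions for well chosen
  words shows that \<open>[a, b, c]\<close> is congruent to \<open>eps a b c\<close> times \<open>[1, 2, 3]\<close>. Consequently all
  words of length four lie in the ideal, and \<open>A\<^sup>!\<^sub>3\<close> is identified with \<open>k\<close> by
  \<open>trace3 x = \<Sum>r s i. eps r s i * x [r, s, i]\<close>, which on products of letters is minus the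
  real part of the triple octonion product.

  The pairing \<open>(x, y) \<mapsto> trace3 (x y)\<close> vanishes on the ideal, is symmetric because \<open>eps\<close> is
  invariant under cyclic permutations, and pairs the basis \<open>1, [i], basis2 i, [1, 2, 3]\<close> of
  \<open>A\<^sup>!\<close> with \<open>[1, 2, 3], basis2 i, [i], 1\<close>. Hence \<open>x \<mapsto> trace3 (x \<cdot>)\<close> is an isomorphism of
  bimodules from \<open>A\<^sup>!\<close> onto its linear dual.
\<close>

definition word :: "nat list \<Rightarrow> nat list \<Rightarrow> 'k::field" where
  "word u = (\<lambda>v. if v = u then 1 else 0)"

lemma word_apply: "word u v = (if v = u then 1 else 0)"
  by (simp add: word_def)

lemma word_Cons_Nil: "word (x # u) [] = 0"
  by (simp add: word_def)

lemma word_Cons_apply: "word (x # u) (y # v) = (if y = x then word u v else 0)"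
  by (simp add: word_def)

lemma sum_if_const_cond: "(\<Sum>x\<in>S. if P then g x else 0) = (if P then \<Sum>x\<in>S. g x else 0)"
  by (cases P) simp_all

lemmas sum_word_collapse_simps = word_Cons_apply word_Cons_Nil word_apply[of "[]"]
  if_distrib[where f="\<lambda>x. _ * x"] if_distrib[where f="\<lambda>x. x * _"]
  sum_if_const_cond sum.delta sum.delta'

definition lderiv :: "nat \<Rightarrow> (nat list \<Rightarrow> 'k::field) \<Rightarrow> nat list \<Rightarrow> 'k" where
  "lderiv x f = (\<lambda>u. f (x # u))"

lemma tmul_Nil: "tmul f g [] = f [] * g []"
  by (simp add: tmul_def)

lemma tmul_Cons: "tmul f g (x # w) = f [] * g (x # w) + tmul (lderiv x f) g w"
  unfolding tmul_def lderiv_def by (simp add: sum.atMost_Suc_shift del: sum.atMost_Suc)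

lemma tmul_deg1: "tmul f g [r] = f [] * g [r] + f [r] * g []"
  by (simp add: tmul_Cons tmul_Nil lderiv_def)

lemma tmul_deg2: "tmul f g [r, s] = f [] * g [r, s] + f [r] * g [s] + f [r, s] * g []"
  by (simp add: tmul_Cons tmul_Nil lderiv_def)

lemma tmul_deg3:
  "tmul f g [r, s, i] = f [] * g [r, s, i] + f [r] * g [s, i] + f [r, s] * g [i] + f [r, s, i] * g []"
  by (simp add: tmul_Cons tmul_Nil lderiv_def)

lemma tmul_add_left: "tmul (\<lambda>w. f w + f' w) g = (\<lambda>w. tmul f g w + tmul f' g w)"
  by (simp add: tmul_def sum.distrib distrib_right fun_eq_iff)

lemma tmul_add_right: "tmul f (\<lambda>w. g w + g' w) = (\<lambda>w. tmul f g w + tmul f g' w)"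
  by (simp add: tmul_def sum.distrib distrib_left fun_eq_iff)

lemma tmul_scale_left: "tmul (\<lambda>w. c * f w) g = (\<lambda>w. c * tmul f g w)"
  by (simp add: tmul_def sum_distrib_left fun_eq_iff mult.assoc)

lemma tmul_scale_right: "tmul f (\<lambda>w. c * g w) = (\<lambda>w. c * tmul f g w)"
  by (simp add: tmul_def sum_distrib_left fun_eq_iff mult.left_commute)

lemma tmul_diff_left: "tmul (\<lambda>w. f w - f' w) g = (\<lambda>w. tmul f g w - tmul f' g w)"
  by (simp add: tmul_def sum_subtractf left_diff_distrib fun_eq_iff)

lemma tmul_diff_right: "tmul f (\<lambda>w. g w - g' w) = (\<lambda>w. tmul f g w - tmul f g' w)"
  by (simp add: tmul_def sum_subtractf right_diff_distrib fun_eq_iff)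

lemma tmul_zero_left: "tmul (\<lambda>_. 0) g = (\<lambda>_. 0)"
  by (simp add: tmul_def fun_eq_iff)

lemma tmul_zero_right: "tmul f (\<lambda>_. 0) = (\<lambda>_. 0)"
  by (simp add: tmul_def fun_eq_iff)

lemma tmul_sum_right:
  "finite S \<Longrightarrow> tmul f (\<lambda>w. \<Sum>k\<in>S. G k w) = (\<lambda>w. \<Sum>k\<in>S. tmul f (G k) w)"
  by (induction S rule: finite_induct) (simp_all add: tmul_zero_right tmul_add_right)

lemma tmul_sum_left:
  "finite S \<Longrightarrow> tmul (\<lambda>w. \<Sum>k\<in>S. F k w) g = (\<lambda>w. \<Sum>k\<in>S. tmul (F k) g w)"
  by (induction S rule: finite_induct) (simp_all add: tmul_zero_left tmul_add_left)

lemma lderiv_tmul: "lderiv x (tmul f g) = (\<lambda>w. f [] * lderiv x g w + tmul (lderiv x f) g w)"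
  by (simp add: fun_eq_iff lderiv_def tmul_Cons)

lemma tmul_assoc: "tmul (tmul f g) h = tmul f (tmul g h)"
proof
  fix w
  show "tmul (tmul f g) h w = tmul f (tmul g h) w"
  proof (induction w arbitrary: f)
    case Nil
    then show ?case by (simp add: tmul_Nil)
  next
    case (Cons x w)
    have "tmul (tmul f g) h (x # w)
        = f [] * g [] * h (x # w) + f [] * tmul (lderiv x g) h w + tmul (tmul (lderiv x f) g) h w"
      by (simp add: tmul_Cons tmul_Nil lderiv_tmul tmul_add_left tmul_scale_left)
    also have "\<dots> = tmul f (tmul g h) (x # w)"
      by (simp add: tmul_Cons tmul_Nil Cons.IH distrib_left mult.assoc)
    finally show ?case .
  qed
qed

lemma lderiv_word_Nil: "lderiv x (word []) = (\<lambda>_. 0)"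
  by (simp add: lderiv_def word_def fun_eq_iff)

lemma lderiv_word_Cons: "lderiv x (word (y # u)) = (if x = y then word u else (\<lambda>_. 0))"
  by (auto simp add: lderiv_def word_def fun_eq_iff)

lemma tmul_word_Nil_right: "tmul f (word []) = f"
proof
  show "tmul f (word []) w = f w" for w
    by (induction w arbitrary: f) (simp_all add: tmul_Nil tmul_Cons word_def lderiv_def)
qed

lemma tmul_word_Nil_left: "tmul (word []) g = g"
proof
  show "tmul (word []) g w = g w" for w
    by (cases w) (simp_all add: tmul_Nil tmul_Cons lderiv_word_Nil tmul_zero_left word_apply)
qed

lemma tmul_word: "tmul (word u) (word v) = (word (u @ v) :: nat list \<Rightarrow> 'k::field)"
proof (induction u)
  case Nil
  show ?case by (simp add: tmul_word_Nil_left)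
next
  case (Cons y u)
  show ?case
  proof
    show "tmul (word (y # u)) (word v) w = (word ((y # u) @ v) w :: 'k)" for w
      by (cases w) (simp_all add: tmul_Nil tmul_Cons lderiv_word_Cons Cons.IH tmul_zero_left word_apply)
  qed
qed

lemma tmul_nonzeroD: "tmul f g w \<noteq> 0 \<Longrightarrow> \<exists>i. f (take i w) \<noteq> 0 \<and> g (drop i w) \<noteq> 0"
  unfolding tmul_def by (metis (no_types, lifting) mult_eq_0_iff sum.neutral)

lemma tens_tmul:
  assumes "f \<in> tens" "g \<in> tens"
  shows "tmul f g \<in> tens"
proof -
  have supp: "\<exists>u v. f u \<noteq> 0 \<and> g v \<noteq> 0 \<and> w = u @ v" if "tmul f g w \<noteq> 0" for w
    using tmul_nonzeroD[OF that] by (metis append_take_drop_id)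
  have "{w. tmul f g w \<noteq> 0} \<subseteq> (\<lambda>(u, v). u @ v) ` ({u. f u \<noteq> 0} \<times> {v. g v \<noteq> 0})"
    using supp by fastforce
  moreover have "finite ({u. f u \<noteq> 0} \<times> {v. g v \<noteq> 0})"
    using assms by (simp add: tens_def)
  ultimately have "finite {w. tmul f g w \<noteq> 0}"
    by (meson finite_imageI finite_subset)
  moreover have "set w \<subseteq> {1..7}" if "tmul f g w \<noteq> 0" for w
    using supp[OF that] assms unfolding tens_def by fastforce
  ultimately show ?thesis
    by (simp add: tens_def)
qed

lemma tens_zero: "(\<lambda>_. 0) \<in> tens"
  by (simp add: tens_def)

lemma tens_add:
  assumes "f \<in> tens" "g \<in> tens"
  shows "(\<lambda>w. f w + g w) \<in> tens"
proof -
  have "{w. f w + g w \<noteq> 0} \<subseteq> {w. f w \<noteq> 0} \<union> {w. g w \<noteq> 0}"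
    by auto
  then show ?thesis
    using assms unfolding tens_def by (auto intro: finite_subset)
qed

lemma tens_scale: "f \<in> tens \<Longrightarrow> (\<lambda>w. c * f w) \<in> tens"
  unfolding tens_def by (auto intro: rev_finite_subset)

lemma tens_sum: "finite S \<Longrightarrow> (\<And>k. k \<in> S \<Longrightarrow> F k \<in> tens) \<Longrightarrow> (\<lambda>w. \<Sum>k\<in>S. F k w) \<in> tens"
  by (induction S rule: finite_induct) (simp_all add: tens_zero tens_add)

lemma tens_word: "set u \<subseteq> {1..7} \<Longrightarrow> word u \<in> tens"
  by (simp add: tens_def word_def)

lemma thom_tens: "x \<in> thom n \<Longrightarrow> x \<in> tens"
  by (simp add: thom_def)

lemma thom_length: "x \<in> thom n \<Longrightarrow> length w \<noteq> n \<Longrightarrow> x w = 0"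
  by (auto simp: thom_def)

lemma thom_zero: "(\<lambda>_. 0) \<in> thom n"
  by (simp add: thom_def tens_zero)

lemma thom_add:
  assumes "x \<in> thom n" "y \<in> thom n"
  shows "(\<lambda>w. x w + y w) \<in> thom n"
proof -
  have "x w \<noteq> 0 \<or> y w \<noteq> 0" if "x w + y w \<noteq> 0" for w
    using that by auto
  then show ?thesis
    using assms unfolding thom_def by (auto intro: tens_add)
qed

lemma thom_scale: "x \<in> thom n \<Longrightarrow> (\<lambda>w. c * x w) \<in> thom n"
  unfolding thom_def by (auto intro: tens_scale)

lemma thom_diff: "x \<in> thom n \<Longrightarrow> y \<in> thom n \<Longrightarrow> (\<lambda>w. x w - y w) \<in> thom n"
  using thom_add[of x n "\<lambda>w. -1 * y w"] thom_scale[of y n "-1"] by simp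

lemma thom_sum: "finite S \<Longrightarrow> (\<And>k. k \<in> S \<Longrightarrow> F k \<in> thom n) \<Longrightarrow> (\<lambda>w. \<Sum>k\<in>S. F k w) \<in> thom n"
  by (induction S rule: finite_induct) (simp_all add: thom_zero thom_add)

lemma thom_word: "length u = n \<Longrightarrow> set u \<subseteq> {1..7} \<Longrightarrow> word u \<in> thom n"
  by (simp add: thom_def tens_word) (simp add: word_def)

lemma ideal_tens: "x \<in> dual_ideal \<Longrightarrow> x \<in> tens"
proof (induction rule: dual_ideal.induct)
  case (gen a s b)
  then show ?case by (auto intro!: tens_tmul simp: Rperp_def thom_def)
qed (simp_all add: tens_zero tens_add tens_scale vadd_def vsc_def)

lemma ideal_add: "x \<in> dual_ideal \<Longrightarrow> y \<in> dual_ideal \<Longrightarrow> (\<lambda>w. x w + y w) \<in> dual_ideal"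
  using dual_ideal.add by (simp add: vadd_def)

lemma ideal_scale: "x \<in> dual_ideal \<Longrightarrow> (\<lambda>w. c * x w) \<in> dual_ideal"
  using dual_ideal.scale by (simp add: vsc_def)

lemma ideal_scale_cancel:
  assumes "c \<noteq> 0" "(\<lambda>w. c * x w) \<in> dual_ideal"
  shows "x \<in> dual_ideal"
  using ideal_scale[OF assms(2), of "inverse c"] assms(1) by (simp add: mult.assoc[symmetric])

lemma ideal_sum:
  "finite S \<Longrightarrow> (\<And>k. k \<in> S \<Longrightarrow> F k \<in> dual_ideal) \<Longrightarrow> (\<lambda>w. \<Sum>k\<in>S. F k w) \<in> dual_ideal"
  by (induction S rule: finite_induct) (simp_all add: dual_ideal.zero ideal_add)

lemma ideal_tmul_left: "x \<in> dual_ideal \<Longrightarrow> a \<in> tens \<Longrightarrow> tmul a x \<in> dual_ideal"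
proof (induction rule: dual_ideal.induct)
  case (gen a' s b)
  then show ?case
    unfolding tmul_assoc[symmetric] by (intro dual_ideal.gen tens_tmul)
qed (simp_all add: vadd_def vsc_def tmul_zero_right tmul_add_right tmul_scale_right
       dual_ideal.zero ideal_add ideal_scale)

lemma ideal_tmul_right: "x \<in> dual_ideal \<Longrightarrow> b \<in> tens \<Longrightarrow> tmul x b \<in> dual_ideal"
proof (induction rule: dual_ideal.induct)
  case (gen a s b')
  then show ?case
    unfolding tmul_assoc[of "tmul a s" b' b] by (intro dual_ideal.gen tens_tmul)
qed (simp_all add: vadd_def vsc_def tmul_zero_left tmul_add_left tmul_scale_left
       dual_ideal.zero ideal_add ideal_scale)

lemma Rperp_subset_ideal: "s \<in> Rperp \<Longrightarrow> s \<in> dual_ideal"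
  using dual_ideal.gen[of "word []" s "word []"]
  by (simp add: tens_word tmul_word_Nil_left tmul_word_Nil_right)

definition cong_ideal :: "(nat list \<Rightarrow> 'k::field) \<Rightarrow> (nat list \<Rightarrow> 'k) \<Rightarrow> bool" (infix "\<approx>" 50)
  where "x \<approx> y \<longleftrightarrow> (\<lambda>w. x w - y w) \<in> dual_ideal"

lemma cong_refl: "x \<approx> x"
  by (simp add: cong_ideal_def dual_ideal.zero)

lemma cong_trans [trans]: "x \<approx> y \<Longrightarrow> y \<approx> z \<Longrightarrow> x \<approx> z"
  unfolding cong_ideal_def using ideal_add[of "\<lambda>w. x w - y w" "\<lambda>w. y w - z w"] by simp

lemma cong_scale: "x \<approx> y \<Longrightarrow> (\<lambda>w. c * x w) \<approx> (\<lambda>w. c * y w)"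
  unfolding cong_ideal_def using ideal_scale[of "\<lambda>w. x w - y w" c]
  by (simp add: right_diff_distrib)

lemma cong_sym: "x \<approx> y \<Longrightarrow> y \<approx> x"
  using cong_scale[of x y "-1"] by (simp add: cong_ideal_def)

lemma cong_scale_cancel:
  assumes "c \<noteq> 0" "(\<lambda>w. c * x w) \<approx> (\<lambda>w. c * y w)"
  shows "x \<approx> y"
  using assms ideal_scale_cancel[of c "\<lambda>w. x w - y w"] by (simp add: cong_ideal_def right_diff_distrib)

lemma cong_sum:
  assumes "finite S" "\<And>k. k \<in> S \<Longrightarrow> F k \<approx> G k"
  shows "(\<lambda>w. \<Sum>k\<in>S. F k w) \<approx> (\<lambda>w. \<Sum>k\<in>S. G k w)"
  using ideal_sum[of S "\<lambda>k w. F k w - G k w"] assms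
  by (simp add: cong_ideal_def sum_subtractf)

lemma cong_add:
  assumes "x \<approx> y" "x' \<approx> y'"
  shows "(\<lambda>w. x w + x' w) \<approx> (\<lambda>w. y w + y' w)"
proof -
  have "(\<lambda>w. x w + x' w - (y w + y' w)) = (\<lambda>w. (x w - y w) + (x' w - y' w))"
    by (simp add: fun_eq_iff)
  then show ?thesis
    using assms ideal_add unfolding cong_ideal_def by metis
qed

lemma cong_tmul_left: "x \<approx> y \<Longrightarrow> a \<in> tens \<Longrightarrow> tmul a x \<approx> tmul a y"
  unfolding cong_ideal_def using ideal_tmul_left[of "\<lambda>w. x w - y w" a] by (simp add: tmul_diff_right)

lemma cong_tmul_right: "x \<approx> y \<Longrightarrow> b \<in> tens \<Longrightarrow> tmul x b \<approx> tmul y b"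
  unfolding cong_ideal_def using ideal_tmul_right[of "\<lambda>w. x w - y w" b] by (simp add: tmul_diff_left)

lemma cong_zero_iff: "x \<approx> (\<lambda>_. 0) \<longleftrightarrow> x \<in> dual_ideal"
  by (simp add: cong_ideal_def)

lemma cong_ideal_closed: "x \<approx> y \<Longrightarrow> y \<in> dual_ideal \<Longrightarrow> x \<in> dual_ideal"
  unfolding cong_ideal_def using ideal_add[of "\<lambda>w. x w - y w" y] by simp

lemma directed_cyc: "directed i j l = directed j l i"
  unfolding directed_def by blast

lemma directed_not_swap: "directed i j l \<Longrightarrow> \<not> directed j i l"
  unfolding directed_def fano_lines_def set_simps insert_iff prod.inject empty_iff
  by (elim disjE conjE) simp_all

lemma eps_cyc: "eps i j l = eps j l i"
  using directed_cyc[of i j l] directed_cyc[of l j i] by (simp add: eps_def)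

lemma eps_swap: "eps j i l = - eps i j l"
  using directed_not_swap by (auto simp: eps_def)

lemma eps_same: "eps i i l = 0"
  using eps_swap[of i i l] by simp

lemma eps_nonzero_iff: "eps a b c \<noteq> 0 \<longleftrightarrow> directed a b c \<or> directed b a c"
  by (simp add: eps_def)

lemma of_int_eps_nonzero: "eps a b c \<noteq> 0 \<Longrightarrow> (of_int (eps a b c) :: 'k::field) \<noteq> 0"
  by (simp add: eps_def split: if_splits)

lemma eps_nonzero_range:
  assumes "eps a b c \<noteq> 0"
  shows "a \<in> {1..7}" "b \<in> {1..7}" "c \<in> {1..7}"
  using assms unfolding eps_nonzero_iff directed_def fano_lines_def by auto

text \<open>\<open>eps a b c \<noteq> 0\<close> says that \<open>c\<close> is the third point on the line through \<open>a\<close> and \<open>b\<close>,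
  so this is the fact that two points of the Fano plane determine a line.\<close>

lemma eps_line_unique:
  assumes "eps a b i \<noteq> 0" "eps a b j \<noteq> 0"
  shows "i = j"
  using assms(1) unfolding eps_nonzero_iff directed_def fano_lines_def
  by (simp only: set_simps insert_iff prod.inject empty_iff)
    (elim disjE conjE; use assms(2) in \<open>simp add: eps_nonzero_iff directed_def fano_lines_def\<close>)

lemma eps_line_exists:
  assumes "a \<in> {1..7}" "b \<in> {1..7}" "a \<noteq> b"
  shows "\<exists>c. eps a b c \<noteq> 0"
proof -
  have points: "{1..7::nat} = {1, 2, 3, 4, 5, 6, 7}"
    by auto
  show ?thesis
    using assms unfolding points
    by (elim insertE emptyE) (simp_all add: eps_nonzero_iff directed_def fano_lines_def)
qed

lemma sum_eps_collapse:
  assumes "eps a b i \<noteq> 0"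
  shows "(\<Sum>j=1..7. of_int (eps a b j) * f j) = of_int (eps a b i) * (f i :: 'k::field)"
proof -
  have "eps a b j = 0" if "j \<noteq> i" for j
    using eps_line_unique[OF assms, of j] that by auto
  then have "(\<Sum>j=1..7. of_int (eps a b j) * f j) = (\<Sum>j=1..7. if j = i then of_int (eps a b i) * f i else 0)"
    by (intro sum.cong) auto
  then show ?thesis
    using eps_nonzero_range(3)[OF assms] by simp
qed

lemma sum_rotate3: "(\<Sum>r\<in>A. \<Sum>s\<in>B. \<Sum>i\<in>C. F r s i) = (\<Sum>i\<in>C. \<Sum>r\<in>A. \<Sum>s\<in>B. F r s i)"
  by (subst sum.swap) (simp add: sum.swap[of _ B])

section \<open>Degree two\<close>

definition coord2 :: "(nat list \<Rightarrow> 'k::field) \<Rightarrow> nat \<Rightarrow> 'k" where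
  "coord2 x = (\<lambda>i. \<Sum>r=1..7. \<Sum>s=1..7. of_int (eps r s i) * x [r, s])"

lemma coord2_outside:
  assumes "i \<notin> {1..7}"
  shows "coord2 x i = 0"
proof -
  have "eps r s i = 0" for r s
    using eps_nonzero_range(3)[of r s i] assms by auto
  then show ?thesis
    by (simp add: coord2_def)
qed

lemma coord2_scale: "coord2 (\<lambda>w. c * x w) = (\<lambda>i. c * coord2 x i)"
  by (simp add: coord2_def sum_distrib_left mult.left_commute)

lemma coord2_sum: "coord2 (\<lambda>w. \<Sum>k\<in>S. F k w) = (\<lambda>i. \<Sum>k\<in>S. coord2 (F k) i)"
  by (simp add: coord2_def sum_distrib_left sum_rotate3[where C = S])

lemma coord2_add: "coord2 (\<lambda>w. x w + y w) = (\<lambda>i. coord2 x i + coord2 y i)"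
  by (simp add: coord2_def distrib_left sum.distrib)

lemma coord2_diff: "coord2 (\<lambda>w. x w - y w) = (\<lambda>i. coord2 x i - coord2 y i)"
  by (simp add: coord2_def right_diff_distrib sum_subtractf)

lemma coord2_word:
  assumes "a \<in> {1..7}" "b \<in> {1..7}"
  shows "coord2 (word [a, b]) = (\<lambda>i. of_int (eps a b i))"
  using assms by (simp add: coord2_def sum_word_collapse_simps cong: if_cong)

lemma Rperp_iff: "s \<in> Rperp \<longleftrightarrow> s \<in> thom 2 \<and> coord2 s = (\<lambda>_. 0)"
proof -
  have "coord2 s i = (\<Sum>m=1..7. \<Sum>n=1..7. of_int (eps i m n) * s [m, n])" for i
    using eps_cyc[of i] by (simp add: coord2_def)
  moreover have "coord2 s = (\<lambda>_. 0) \<longleftrightarrow> (\<forall>i\<in>{1..7}. coord2 s i = 0)"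
    using coord2_outside by (fastforce simp: fun_eq_iff)
  ultimately show ?thesis
    unfolding Rperp_def by simp
qed

lemma coord2_tmul_Rperp:
  assumes "s \<in> Rperp"
  shows "coord2 (tmul (tmul a s) b) = (\<lambda>i. a [] * b [] * coord2 s i)"
proof -
  have "s [] = 0" "\<And>r. s [r] = 0"
    using assms by (auto simp: Rperp_def thom_def)
  then show ?thesis
    by (simp add: coord2_def tmul_Nil tmul_deg1 tmul_deg2 sum_distrib_left mult_ac)
qed

lemma coord2_ideal: "x \<in> dual_ideal \<Longrightarrow> coord2 x = (\<lambda>_. 0)"
proof (induction rule: dual_ideal.induct)
  case zero
  then show ?case by (simp add: coord2_def)
next
  case (gen a s b)
  then show ?case by (simp add: coord2_tmul_Rperp Rperp_iff)
next
  case (add x y)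
  then show ?case by (simp add: vadd_def coord2_add)
next
  case (scale x c)
  then show ?case by (simp add: vsc_def coord2_scale)
qed

definition line_pair :: "nat \<Rightarrow> nat \<times> nat" where
  "line_pair i = (SOME (a, b). eps a b i = 1)"

lemma eps_line_pair:
  assumes "i \<in> {1..7}"
  shows "eps (fst (line_pair i)) (snd (line_pair i)) i = 1"
proof -
  define a where "a = (if i = 1 then 2 else 1 :: nat)"
  have "a \<in> {1..7}" "i \<noteq> a"
    by (auto simp: a_def)
  then obtain b where "eps i a b \<noteq> 0"
    using eps_line_exists assms by blast
  then have "eps a b i = 1 \<or> eps a b i = -1"
    unfolding eps_cyc[of i a b] by (auto simp: eps_def split: if_splits)
  then have "eps a b i = 1 \<or> eps b a i = 1"
    using eps_swap[of a b i] by auto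
  then have "\<exists>p. (\<lambda>(a, b). eps a b i = 1) p"
    by auto
  from someI_ex[OF this] show ?thesis
    by (simp add: line_pair_def case_prod_unfold)
qed

definition basis2 :: "nat \<Rightarrow> nat list \<Rightarrow> 'k::field" where
  "basis2 i = word [fst (line_pair i), snd (line_pair i)]"

lemma line_pair_range:
  assumes "i \<in> {1..7}"
  shows "fst (line_pair i) \<in> {1..7}" "snd (line_pair i) \<in> {1..7}"
  using eps_nonzero_range[of "fst (line_pair i)" "snd (line_pair i)" i] eps_line_pair[OF assms]
  by simp_all

lemma basis2_thom: "i \<in> {1..7} \<Longrightarrow> basis2 i \<in> thom 2"
  unfolding basis2_def using line_pair_range by (intro thom_word) auto

lemma coord2_basis2:
  assumes "i \<in> {1..7}"
  shows "coord2 (basis2 i) = (\<lambda>j. if j = i then 1 else 0)"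
proof
  fix j
  have "eps (fst (line_pair i)) (snd (line_pair i)) j = (if j = i then 1 else 0)"
    using eps_line_pair[OF assms] eps_line_unique[of "fst (line_pair i)" "snd (line_pair i)" i j]
    by auto
  then show "coord2 (basis2 i) j = (if j = i then 1 else 0)"
    using line_pair_range[OF assms] by (simp add: basis2_def coord2_word)
qed

lemma span2_thom: "(\<lambda>w. \<Sum>i=1..7. u i * basis2 i w) \<in> thom 2"
  by (intro thom_sum thom_scale basis2_thom) auto

lemma coord2_span2:
  "coord2 (\<lambda>w. \<Sum>i=1..7. u i * basis2 i w) = (\<lambda>j. if j \<in> {1..7} then u j else 0)"
proof
  fix j
  have "coord2 (\<lambda>w. \<Sum>i=1..7. u i * basis2 i w) j = (\<Sum>i=1..7. u i * (if j = i then 1 else 0))"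
    by (simp add: coord2_sum coord2_scale coord2_basis2)
  then show "coord2 (\<lambda>w. \<Sum>i=1..7. u i * basis2 i w) j = (if j \<in> {1..7} then u j else 0)"
    by (simp add: if_distrib[where f="\<lambda>x. _ * x"] cong: if_cong)
qed

lemma deg2_cong:
  assumes "x \<in> thom 2"
  shows "x \<approx> (\<lambda>w. \<Sum>i=1..7. coord2 x i * basis2 i w)"
proof -
  let ?d = "\<lambda>w. x w - (\<Sum>i=1..7. coord2 x i * basis2 i w)"
  have "?d \<in> thom 2"
    using thom_diff[OF assms span2_thom] .
  moreover have "coord2 ?d = (\<lambda>_. 0)"
  proof
    show "coord2 ?d j = 0" for j
      unfolding coord2_diff coord2_span2 using coord2_outside[of j x] by simp
  qed
  ultimately show ?thesis
    unfolding cong_ideal_def by (simp add: Rperp_iff Rperp_subset_ideal)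
qed

lemma word2_cong:
  assumes "a \<in> {1..7}" "b \<in> {1..7}"
  shows "word [a, b] \<approx> (\<lambda>w. \<Sum>i=1..7. of_int (eps a b i) * basis2 i w)"
  using deg2_cong[OF thom_word, of "[a, b]"] assms by (simp add: coord2_word)

section \<open>Degree three and higher\<close>

text \<open>A cubic word is reduced in two ways, through its left and through its right quadratic
  factor. For suitable words one of the two expansions has a single nonzero term, since the
  sum over \<open>eps a b j\<close> only sees the third point of the line through \<open>a\<close> and \<open>b\<close>.\<close>

lemma word3_cong_left:
  assumes "a \<in> {1..7}" "b \<in> {1..7}" "c \<in> {1..7}"
  shows "word [a, b, c] \<approx> (\<lambda>w. \<Sum>j=1..7. of_int (eps a b j) * tmul (basis2 j) (word [c]) w)"
  using cong_tmul_right[OF word2_cong tens_word, of a b "[c]"] assms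
  by (simp add: tmul_word tmul_sum_left tmul_scale_left)

lemma word3_cong_right:
  assumes "a \<in> {1..7}" "b \<in> {1..7}" "c \<in> {1..7}"
  shows "word [a, b, c] \<approx> (\<lambda>w. \<Sum>j=1..7. of_int (eps b c j) * tmul (word [a]) (basis2 j) w)"
  using cong_tmul_left[OF word2_cong tens_word, of b c "[a]"] assms
  by (simp add: tmul_word tmul_sum_right tmul_scale_right)

lemma tmul_basis2_word_ideal:
  assumes "j \<in> {1..7}" "c \<in> {1..7}" "j \<noteq> c"
  shows "tmul (basis2 j) (word [c]) \<in> dual_ideal"
proof -
  obtain a where "eps c j a \<noteq> 0"
    using eps_line_exists assms by metis
  then have eps: "eps a c j \<noteq> 0" and a: "a \<in> {1..7}"
    using eps_cyc[of a c j] eps_nonzero_range by auto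
  have "(\<lambda>w. of_int (eps a c j) * tmul (basis2 j) (word [c]) w) \<approx> word [a, c, c]"
    using cong_sym[OF word3_cong_left[of a c c]] assms a unfolding sum_eps_collapse[OF eps] by simp
  also have "word [a, c, c] \<approx> (\<lambda>_. 0)"
    using word3_cong_right[of a c c] assms a by (simp add: eps_same)
  finally have "(\<lambda>w. of_int (eps a c j) * tmul (basis2 j) (word [c]) w) \<in> dual_ideal"
    by (simp add: cong_zero_iff)
  then show ?thesis
    using ideal_scale_cancel of_int_eps_nonzero[OF eps] by blast
qed

lemma tmul_basis2_word_self_cong:
  assumes "a \<in> {1..7}" "c \<in> {1..7}" "a \<noteq> c"
  shows "tmul (basis2 c) (word [c]) \<approx> tmul (word [a]) (basis2 a)"
proof -
  obtain b where "eps c a b \<noteq> 0"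
    using eps_line_exists assms by metis
  then have eps: "eps a b c \<noteq> 0" "eps b c a = eps a b c" and b: "b \<in> {1..7}"
    using eps_cyc[of a b c] eps_cyc[of b c a] eps_nonzero_range by auto
  have "(\<lambda>w. of_int (eps a b c) * tmul (basis2 c) (word [c]) w) \<approx> word [a, b, c]"
    using cong_sym[OF word3_cong_left[of a b c]] assms b unfolding sum_eps_collapse[OF eps(1)] by simp
  also have "\<dots> \<approx> (\<lambda>w. of_int (eps a b c) * tmul (word [a]) (basis2 a) w)"
    using word3_cong_right[of a b c] assms b eps unfolding sum_eps_collapse[OF eps(1)[folded eps(2)]]
    by simp
  finally show ?thesis
    using cong_scale_cancel of_int_eps_nonzero[OF eps(1)] by blast
qed

text \<open>Kept as a constant: the simplifier rewrites the numeral \<open>1\<close> inside \<open>word [1, 2, 3]\<close>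
  to \<open>Suc 0\<close>, after which lemmas stated for the word no longer apply.\<close>

definition omega :: "nat list \<Rightarrow> 'k::field" where
  "omega = word [1, 2, 3]"

lemma tmul_basis2_word_self_cong_omega:
  assumes "c \<in> {1..7}"
  shows "tmul (basis2 c) (word [c]) \<approx> (omega :: nat list \<Rightarrow> 'k::field)"
proof -
  have "eps 1 2 3 = 1"
    by (simp add: eps_def directed_def fano_lines_def)
  then have collapse: "(\<Sum>j=1..7. of_int (eps 1 2 j) * f j) = f 3" for f :: "nat \<Rightarrow> 'k"
    using sum_eps_collapse[of 1 2 3 f] by simp
  have "(omega :: nat list \<Rightarrow> 'k)
      \<approx> (\<lambda>w. \<Sum>j=1..7. of_int (eps 1 2 j) * tmul (basis2 j) (word [3]) w)"
    unfolding omega_def by (rule word3_cong_left) auto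
  then have top: "tmul (basis2 3) (word [3]) \<approx> (omega :: nat list \<Rightarrow> 'k)"
    unfolding collapse by (rule cong_sym)
  show ?thesis
  proof (cases "c = 3")
    case True
    then show ?thesis using top by simp
  next
    case False
    define a where "a = (if c = 1 then 2 else 1 :: nat)"
    have a: "a \<in> {1..7}" "a \<noteq> c" "a \<noteq> 3"
      using False by (auto simp: a_def)
    have "tmul (basis2 c) (word [c]) \<approx> tmul (word [a]) (basis2 a)"
      using tmul_basis2_word_self_cong a assms by blast
    also have "\<dots> \<approx> tmul (basis2 3) (word [3])"
      using cong_sym[OF tmul_basis2_word_self_cong[of a 3]] a by simp
    also note top
    finally show ?thesis .
  qed
qed

lemma word3_cong:
  assumes "a \<in> {1..7}" "b \<in> {1..7}" "c \<in> {1..7}"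
  shows "word [a, b, c] \<approx> (\<lambda>w. of_int (eps a b c) * omega w)"
proof -
  have E: "tmul (basis2 j) (word [c]) \<approx> (\<lambda>w. if j = c then omega w else 0)"
    if "j \<in> {1..7}" for j
    using that assms tmul_basis2_word_ideal[of j c] tmul_basis2_word_self_cong_omega[of c]
    by (cases "j = c") (simp_all add: cong_zero_iff)
  have "word [a, b, c] \<approx> (\<lambda>w. \<Sum>j=1..7. of_int (eps a b j) * tmul (basis2 j) (word [c]) w)"
    using assms by (rule word3_cong_left)
  also have "\<dots> \<approx> (\<lambda>w. \<Sum>j=1..7. of_int (eps a b j) * (if j = c then omega w else 0))"
    using E by (intro cong_sum cong_scale) auto
  also have "\<dots> = (\<lambda>w. of_int (eps a b c) * omega w)"
    using assms by (simp add: if_distrib[where f="\<lambda>x. _ * x"] cong: if_cong)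
  finally show ?thesis .
qed

lemma word_append3_cong:
  assumes "a \<in> {1..7}" "b \<in> {1..7}" "c \<in> {1..7}" "set u \<subseteq> {1..7}" "set v \<subseteq> {1..7}"
  shows "word (u @ [a, b, c] @ v) \<approx> (\<lambda>w. of_int (eps a b c) * word (u @ [1, 2, 3] @ v) w)"
  using cong_tmul_left[OF cong_tmul_right[OF word3_cong tens_word] tens_word, of a b c v u] assms
  by (simp add: omega_def tmul_word tmul_scale_left tmul_scale_right)

lemma word4_ideal:
  assumes "a \<in> {1..7}" "b \<in> {1..7}" "c \<in> {1..7}" "d \<in> {1..7}"
  shows "word [a, b, c, d] \<in> dual_ideal"
proof -
  have "word [1, 1, 2, 3] \<in> dual_ideal"
    using word_append3_cong[of 1 1 2 "[]" "[3]"] by (simp add: eps_same cong_zero_iff)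
  then have "word [1, 2, 3, d] \<in> dual_ideal"
    using word_append3_cong[of 2 3 d "[1]" "[]"] assms by (auto intro: cong_ideal_closed ideal_scale)
  then show ?thesis
    using word_append3_cong[of a b c "[]" "[d]"] assms by (auto intro: cong_ideal_closed ideal_scale)
qed

lemma long_word_ideal:
  assumes "4 \<le> length w" "set w \<subseteq> {1..7}"
  shows "word w \<in> dual_ideal"
proof -
  obtain a b c d u where w: "w = [a, b, c, d] @ u"
    using assms(1) by (auto simp: numeral_eq_Suc Suc_le_length_iff)
  then have "tmul (word [a, b, c, d]) (word u) \<in> dual_ideal"
    using assms(2) by (intro ideal_tmul_right word4_ideal tens_word) auto
  then show ?thesis
    by (simp add: w tmul_word)
qed

definition trace3 :: "(nat list \<Rightarrow> 'k::field) \<Rightarrow> 'k" where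
  "trace3 x = (\<Sum>r=1..7. \<Sum>s=1..7. \<Sum>i=1..7. of_int (eps r s i) * x [r, s, i])"

lemma trace3_add: "trace3 (\<lambda>w. x w + y w) = trace3 x + trace3 y"
  by (simp add: trace3_def distrib_left sum.distrib)

lemma trace3_scale: "trace3 (\<lambda>w. c * x w) = c * trace3 x"
  by (simp add: trace3_def sum_distrib_left mult.left_commute)

lemma trace3_zero: "trace3 (\<lambda>_. 0) = 0"
  by (simp add: trace3_def)

lemma trace3_sum: "finite S \<Longrightarrow> trace3 (\<lambda>w. \<Sum>k\<in>S. F k w) = (\<Sum>k\<in>S. trace3 (F k))"
  by (induction S rule: finite_induct) (simp_all add: trace3_zero trace3_add)

lemma trace3_word:
  assumes "a \<in> {1..7}" "b \<in> {1..7}" "c \<in> {1..7}"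
  shows "trace3 (word [a, b, c]) = of_int (eps a b c)"
  using assms by (simp add: trace3_def sum_word_collapse_simps cong: if_cong)

lemma sum_eps_rotate:
  "(\<Sum>r=1..7. \<Sum>s=1..7. \<Sum>i=1..7. of_int (eps r s i) * F r s i)
 = (\<Sum>r=1..7. \<Sum>s=1..7. \<Sum>i=1..7. of_int (eps r s i) * F s i r :: 'k::field)"
proof -
  have "(\<Sum>r=1..7. \<Sum>s=1..7. \<Sum>i=1..7. of_int (eps r s i) * F r s i)
      = (\<Sum>i=1..7. \<Sum>r=1..7. \<Sum>s=1..7. of_int (eps r s i) * F r s i :: 'k)"
    by (rule sum_rotate3)
  also have "\<dots> = (\<Sum>i=1..7. \<Sum>r=1..7. \<Sum>s=1..7. of_int (eps i r s) * F r s i)"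
    by (intro sum.cong refl) (metis eps_cyc)
  finally show ?thesis .
qed

lemma trace3_tmul:
  "trace3 (tmul a y) = (\<Sum>r=1..7. \<Sum>s=1..7. \<Sum>i=1..7. of_int (eps r s i) *
     (a [] * y [r, s, i] + a [r] * y [s, i] + a [r, s] * y [i] + a [r, s, i] * y []))"
  by (simp add: trace3_def tmul_deg3)

lemma trace3_tmul_commute: "trace3 (tmul a y) = trace3 (tmul y a)"
proof -
  let ?S = "\<lambda>F. \<Sum>r=1..7. \<Sum>s=1..7. \<Sum>i=1..7. of_int (eps r s i) * F r s i"
  have split: "trace3 (tmul a y) = ?S (\<lambda>r s i. a [] * y [r, s, i]) + ?S (\<lambda>r s i. a [r] * y [s, i])
      + ?S (\<lambda>r s i. a [r, s] * y [i]) + ?S (\<lambda>r s i. a [r, s, i] * y [])" for a y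
    by (simp add: trace3_tmul distrib_left sum.distrib)
  have "?S (\<lambda>r s i. a [r] * y [s, i]) = ?S (\<lambda>r s i. y [r, s] * a [i])"
    using sum_eps_rotate[of "\<lambda>r s i. y [r, s] * a [i]"] by (simp add: mult.commute)
  moreover have "?S (\<lambda>r s i. a [r, s] * y [i]) = ?S (\<lambda>r s i. y [r] * a [s, i])"
    using sum_eps_rotate[of "\<lambda>r s i. a [r, s] * y [i]"] by (simp add: mult.commute)
  ultimately show ?thesis
    unfolding split[of a y] split[of y a] by (simp add: mult.commute add_ac)
qed

lemma trace3_tmul_Rperp:
  assumes "s \<in> Rperp"
  shows "trace3 (tmul c s) = 0"
proof -
  have "s [] = 0" "\<And>r. s [r] = 0" "\<And>r t i. s [r, t, i] = 0"
    using assms by (auto simp: Rperp_def thom_def)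
  then have "trace3 (tmul c s)
      = (\<Sum>r=1..7. c [r] * (\<Sum>t=1..7. \<Sum>i=1..7. of_int (eps r t i) * s [t, i]))"
    by (simp add: trace3_tmul sum_distrib_left mult.left_commute)
  also have "\<dots> = 0"
    using assms by (simp add: Rperp_def)
  finally show ?thesis .
qed

lemma trace3_ideal: "x \<in> dual_ideal \<Longrightarrow> trace3 x = 0"
proof (induction rule: dual_ideal.induct)
  case (gen a s b)
  have "trace3 (tmul (tmul a s) b) = trace3 (tmul b (tmul a s))"
    by (rule trace3_tmul_commute)
  also have "\<dots> = trace3 (tmul (tmul b a) s)"
    by (simp add: tmul_assoc)
  also have "\<dots> = 0"
    using gen(2) by (rule trace3_tmul_Rperp)
  finally show ?case .
qed (simp_all add: trace3_zero vadd_def vsc_def trace3_add trace3_scale)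

lemma tens_expand:
  assumes "finite S" "\<And>w. f w \<noteq> 0 \<Longrightarrow> w \<in> S"
  shows "f = (\<lambda>v. \<Sum>w\<in>S. f w * word w v)"
proof
  fix v
  have "(\<Sum>w\<in>S. f w * word w v) = (\<Sum>w\<in>S. if w = v then f v else 0)"
    by (intro sum.cong) (auto simp: word_apply)
  then show "f v = (\<Sum>w\<in>S. f w * word w v)"
    using assms by auto
qed

lemma thom_ext:
  assumes "x \<in> thom n" "y \<in> thom n" "\<And>w. length w = n \<Longrightarrow> set w \<subseteq> {1..7} \<Longrightarrow> x w = y w"
  shows "x = y"
proof
  fix v
  show "x v = y v"
  proof (rule ccontr)
    assume ne: "x v \<noteq> y v"
    then have "x v \<noteq> 0 \<or> y v \<noteq> 0"
      by auto
    then have "length v = n" "set v \<subseteq> {1..7}"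
      using assms(1,2) by (auto simp: thom_def tens_def)
    then show False
      using assms(3) ne by blast
  qed
qed

lemma thom3_expand:
  assumes "x \<in> thom 3"
  shows "x = (\<lambda>v. \<Sum>r=1..7. \<Sum>s=1..7. \<Sum>i=1..7. x [r, s, i] * word [r, s, i] v)"
proof (rule thom_ext[OF assms])
  show "(\<lambda>v. \<Sum>r=1..7. \<Sum>s=1..7. \<Sum>i=1..7. x [r, s, i] * word [r, s, i] v) \<in> thom 3"
    by (intro thom_sum thom_scale thom_word) auto
  fix w :: "nat list"
  assume "length w = 3" "set w \<subseteq> {1..7}"
  then obtain a b c where "w = [a, b, c]" "a \<in> {1..7}" "b \<in> {1..7}" "c \<in> {1..7}"
    by (auto simp: numeral_3_eq_3 length_Suc_conv)
  then show "x w = (\<Sum>r=1..7. \<Sum>s=1..7. \<Sum>i=1..7. x [r, s, i] * word [r, s, i] w)"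
    by (simp add: sum_word_collapse_simps cong: if_cong)
qed

lemma deg3_cong:
  assumes "x \<in> thom 3"
  shows "x \<approx> (\<lambda>w. trace3 x * omega w)"
proof -
  have "(\<lambda>v. \<Sum>r=1..7. \<Sum>s=1..7. \<Sum>i=1..7. x [r, s, i] * word [r, s, i] v)
      \<approx> (\<lambda>v. \<Sum>r=1..7. \<Sum>s=1..7. \<Sum>i=1..7. x [r, s, i] * (of_int (eps r s i) * omega v))"
    by (intro cong_sum cong_scale word3_cong) auto
  also have "\<dots> = (\<lambda>w. trace3 x * omega w)"
    by (simp add: trace3_def sum_distrib_right mult.assoc mult.left_commute)
  finally show ?thesis
    using thom3_expand[OF assms] by metis
qed

definition homog :: "nat \<Rightarrow> (nat list \<Rightarrow> 'k::field) \<Rightarrow> nat list \<Rightarrow> 'k" where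
  "homog n x = (\<lambda>w. if length w = n then x w else 0)"

lemma homog_thom: "x \<in> tens \<Longrightarrow> homog n x \<in> thom n"
  unfolding thom_def tens_def homog_def by (auto intro: rev_finite_subset)

lemma homog0_eq: "homog 0 x = (\<lambda>w. x [] * word [] w)"
  by (auto simp: homog_def word_apply)

lemma homog1_eq:
  assumes "x \<in> tens"
  shows "homog 1 x = (\<lambda>w. \<Sum>i=1..7. x [i] * word [i] w)"
proof (rule thom_ext[OF homog_thom[OF assms]])
  show "(\<lambda>w. \<Sum>i=1..7. x [i] * word [i] w) \<in> thom 1"
    by (intro thom_sum thom_scale thom_word) auto
  fix w :: "nat list"
  assume "length w = 1" "set w \<subseteq> {1..7}"
  then obtain a where "w = [a]" "a \<in> {1..7}"
    by (auto simp: length_Suc_conv)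
  then show "homog 1 x w = (\<Sum>i=1..7. x [i] * word [i] w)"
    by (simp add: homog_def sum_word_collapse_simps cong: if_cong)
qed

lemma coord2_homog2: "coord2 (homog 2 x) = coord2 x"
  by (simp add: coord2_def homog_def)

lemma trace3_homog3: "trace3 (homog 3 x) = trace3 x"
  by (simp add: trace3_def homog_def)

lemma high_part_ideal:
  assumes "x \<in> tens"
  shows "(\<lambda>w. if 4 \<le> length w then x w else 0) \<in> dual_ideal"
proof -
  let ?S = "{w. x w \<noteq> 0}"
  have "finite ?S" "\<And>w. w \<in> ?S \<Longrightarrow> set w \<subseteq> {1..7}"
    using assms by (auto simp: tens_def)
  moreover have "(\<lambda>v. (if 4 \<le> length w then x w else 0) * word w v) \<in> dual_ideal"
    if "set w \<subseteq> {1..7}" for w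
    using that by (cases "4 \<le> length w") (simp_all add: ideal_scale long_word_ideal dual_ideal.zero)
  moreover have "(\<lambda>w. if 4 \<le> length w then x w else 0)
      = (\<lambda>v. \<Sum>w\<in>?S. (if 4 \<le> length w then x w else 0) * word w v)"
    using \<open>finite ?S\<close> by (rule tens_expand) (auto split: if_splits)
  ultimately show ?thesis
    using ideal_sum[of ?S "\<lambda>w v. (if 4 \<le> length w then x w else 0) * word w v"] by auto
qed

definition normal_form :: "(nat list \<Rightarrow> 'k::field) \<Rightarrow> nat list \<Rightarrow> 'k" where
  "normal_form x = (\<lambda>w. x [] * word [] w + (\<Sum>i=1..7. x [i] * word [i] w + coord2 x i * basis2 i w)
     + trace3 x * omega w)"

lemma cong_normal_form:
  assumes "x \<in> tens"
  shows "x \<approx> normal_form x"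
proof -
  have split: "x = (\<lambda>w. homog 0 x w + homog 1 x w + homog 2 x w + homog 3 x w
      + (if 4 \<le> length w then x w else 0))"
  proof
    fix w :: "nat list"
    consider "length w = 0" | "length w = 1" | "length w = 2" | "length w = 3" | "4 \<le> length w"
      by linarith
    then show "x w = homog 0 x w + homog 1 x w + homog 2 x w + homog 3 x w
        + (if 4 \<le> length w then x w else 0)"
      by cases (auto simp: homog_def)
  qed
  have "(\<lambda>w. homog 0 x w + homog 1 x w + homog 2 x w + homog 3 x w
      + (if 4 \<le> length w then x w else 0))
    \<approx> (\<lambda>w. x [] * word [] w + (\<Sum>i=1..7. x [i] * word [i] w)
      + (\<Sum>i=1..7. coord2 x i * basis2 i w) + trace3 x * omega w + 0)"
    using deg2_cong[OF homog_thom[OF assms]] deg3_cong[OF homog_thom[OF assms]]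
      high_part_ideal[OF assms]
    unfolding homog0_eq homog1_eq[OF assms]
    by (intro cong_add) (simp_all add: cong_refl coord2_homog2 trace3_homog3 cong_zero_iff)
  also have "\<dots> = normal_form x"
    by (simp add: normal_form_def sum.distrib add.assoc)
  finally show ?thesis
    using split by metis
qed

section \<open>The Frobenius pairing\<close>

lemma trace3_tmul_word_Nil: "trace3 (tmul (word []) t) = trace3 t"
  by (simp add: tmul_word_Nil_left)

lemma trace3_tmul_word1:
  assumes "i \<in> {1..7}"
  shows "trace3 (tmul (word [i]) t) = coord2 t i"
proof -
  have "trace3 (tmul (word [i]) t) = (\<Sum>s=1..7. \<Sum>k=1..7. of_int (eps i s k) * t [s, k])"
    using assms by (simp add: trace3_tmul sum_word_collapse_simps cong: if_cong)
  also have "\<dots> = coord2 t i"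
    by (simp add: coord2_def eps_cyc[of i])
  finally show ?thesis .
qed

lemma trace3_tmul_basis2:
  assumes "i \<in> {1..7}"
  shows "trace3 (tmul (basis2 i) t) = t [i]"
proof -
  define p q where "p = fst (line_pair i)" and "q = snd (line_pair i)"
  have pq: "p \<in> {1..7}" "q \<in> {1..7}" "eps p q i = 1"
    using line_pair_range[OF assms] eps_line_pair[OF assms] by (simp_all add: p_def q_def)
  then have "trace3 (tmul (basis2 i) t) = (\<Sum>k=1..7. of_int (eps p q k) * t [k])"
    by (simp add: basis2_def p_def[symmetric] q_def[symmetric] trace3_tmul sum_word_collapse_simps
        cong: if_cong)
  also have "\<dots> = t [i]"
    using sum_eps_collapse[of p q i "\<lambda>k. t [k]"] pq(3) by simp
  finally show ?thesis .
qed

lemma trace3_tmul_omega: "trace3 (tmul omega t) = t []"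
proof -
  have "trace3 (tmul omega t) = of_int (eps 1 2 3) * t []"
    by (simp add: omega_def trace3_tmul sum_word_collapse_simps cong: if_cong)
  then show ?thesis
    by (simp add: eps_def directed_def fano_lines_def)
qed

lemma basis2_tens: "i \<in> {1..7} \<Longrightarrow> basis2 i \<in> tens"
  by (rule thom_tens[OF basis2_thom])

lemma omega_tens: "omega \<in> tens"
  by (simp add: omega_def tens_word)

lemma normal_form_tens: "normal_form x \<in> tens"
  unfolding normal_form_def
  by (intro tens_add tens_scale tens_sum tens_word basis2_tens omega_tens) auto

lemma word_inj: "word u = (word v :: nat list \<Rightarrow> 'k::field) \<Longrightarrow> u = v"
  by (drule fun_cong[of _ _ u]) (simp add: word_apply split: if_splits)

lemma finite_spanning_set:
  "\<exists>B :: (nat list \<Rightarrow> 'k::field) set. finite B \<and> B \<subseteq> tens \<and>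
     (\<forall>x\<in>tens. \<exists>c. vadd x (vsc (-1) (\<lambda>w. \<Sum>b\<in>B. c b * b w)) \<in> dual_ideal)"
proof -
  define W where "W = {w :: nat list. set w \<subseteq> {1..7} \<and> length w \<le> 3}"
  have fin: "finite W"
    unfolding W_def by (rule finite_lists_length_le) simp
  have inj: "inj_on (word :: nat list \<Rightarrow> nat list \<Rightarrow> 'k) W"
    using word_inj by (rule inj_onI)
  have "\<exists>c. vadd x (vsc (-1) (\<lambda>w. \<Sum>b\<in>word ` W. c b * b w)) \<in> dual_ideal"
    if x: "x \<in> tens" for x :: "nat list \<Rightarrow> 'k"
  proof -
    let ?lo = "\<lambda>w. if length w \<le> 3 then x w else 0"
    have "?lo = (\<lambda>v. \<Sum>w\<in>W. ?lo w * word w v)"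
      using fin x by (intro tens_expand) (auto simp: W_def tens_def split: if_splits)
    also have "\<dots> = (\<lambda>v. \<Sum>w\<in>W. x w * word w v)"
      by (intro ext sum.cong) (auto simp: W_def)
    also have "\<dots> = (\<lambda>v. \<Sum>b\<in>word ` W. x (inv_into W word b) * b v)"
      by (simp add: sum.reindex[OF inj] inv_into_f_f[OF inj])
    finally have lo: "?lo = (\<lambda>v. \<Sum>b\<in>word ` W. x (inv_into W word b) * b v)" .
    have "vadd x (vsc (-1) (\<lambda>v. \<Sum>b\<in>word ` W. x (inv_into W word b) * b v)) = vadd x (vsc (-1) ?lo)"
      by (simp only: lo)
    also have "\<dots> = (\<lambda>w. if 4 \<le> length w then x w else 0)"
      by (simp add: vadd_def vsc_def fun_eq_iff)
    finally have "vadd x (vsc (-1) (\<lambda>v. \<Sum>b\<in>word ` W. x (inv_into W word b) * b v))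
        = (\<lambda>w. if 4 \<le> length w then x w else 0)" .
    with high_part_ideal[OF x] show ?thesis
      by (intro exI[of _ "\<lambda>b. x (inv_into W word b)"]) simp
  qed
  moreover have "word ` W \<subseteq> tens"
    by (auto simp: W_def tens_word)
  ultimately show ?thesis
    using fin by blast
qed

lemma lin_on_scalar_add:
  "lin_on_scalar tens f \<Longrightarrow> a \<in> tens \<Longrightarrow> b \<in> tens \<Longrightarrow> f (\<lambda>w. a w + b w) = f a + f b"
  unfolding lin_on_scalar_def vadd_def by blast

lemma lin_on_scalar_scale: "lin_on_scalar tens f \<Longrightarrow> a \<in> tens \<Longrightarrow> f (\<lambda>w. c * a w) = c * f a"
  unfolding lin_on_scalar_def vsc_def by blast

lemma lin_on_scalar_sum:
  assumes "finite S" "lin_on_scalar tens f" "\<And>k. k \<in> S \<Longrightarrow> F k \<in> tens"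
  shows "f (\<lambda>w. \<Sum>k\<in>S. F k w) = (\<Sum>k\<in>S. f (F k))"
  using assms
proof (induction S rule: finite_induct)
  case empty
  then show ?case
    using lin_on_scalar_scale[of f "\<lambda>_. 0" 0] tens_zero by simp
next
  case (insert k S)
  have Fk: "F k \<in> tens" and rest: "(\<lambda>w. \<Sum>k\<in>S. F k w) \<in> tens"
    using insert.prems(2) insert.hyps(1) by (auto intro: tens_sum)
  show ?case
    using lin_on_scalar_add[OF insert.prems(1) Fk rest] insert by simp
qed

lemma lin_on_scalar_normal_form:
  assumes f: "lin_on_scalar tens f"
  shows "f (normal_form t) = t [] * f (word []) + (\<Sum>i=1..7. t [i] * f (word [i]) + coord2 t i * f (basis2 i))
    + trace3 t * f omega"
proof -
  have deg12: "(\<lambda>w. t [i] * word [i] w + coord2 t i * basis2 i w) \<in> tens" if "i \<in> {1..7}" for i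
    using that by (intro tens_add tens_scale tens_word basis2_tens) auto
  let ?A = "\<lambda>w. t [] * word [] w"
  let ?B = "\<lambda>w. \<Sum>i=1..7. t [i] * word [i] w + coord2 t i * basis2 i w"
  let ?C = "\<lambda>w. trace3 t * omega w"
  have A: "?A \<in> tens" and B: "?B \<in> tens" and C: "?C \<in> tens"
    using deg12 by (auto intro!: tens_scale tens_word tens_sum omega_tens)
  have "f (normal_form t) = f (\<lambda>w. ?A w + ?B w) + f ?C"
    unfolding normal_form_def by (rule lin_on_scalar_add[OF f tens_add[OF A B] C])
  also have "\<dots> = f ?A + f ?B + f ?C"
    by (simp only: lin_on_scalar_add[OF f A B])
  finally have split: "f (normal_form t) = f ?A + f ?B + f ?C" .
  have "f ?B = (\<Sum>i=1..7. f (\<lambda>w. t [i] * word [i] w + coord2 t i * basis2 i w))"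
    by (rule lin_on_scalar_sum[OF _ f deg12]) simp_all
  also have "\<dots> = (\<Sum>i=1..7. t [i] * f (word [i]) + coord2 t i * f (basis2 i))"
  proof (rule sum.cong[OF refl])
    fix i :: nat
    assume "i \<in> {1..7}"
    then have wi: "word [i] \<in> tens" and bi: "basis2 i \<in> tens"
      by (simp_all add: tens_word basis2_tens)
    have "f (\<lambda>w. t [i] * word [i] w + coord2 t i * basis2 i w)
        = f (\<lambda>w. t [i] * word [i] w) + f (\<lambda>w. coord2 t i * basis2 i w)"
      using tens_scale[OF wi] tens_scale[OF bi] by (rule lin_on_scalar_add[OF f])
    then show "f (\<lambda>w. t [i] * word [i] w + coord2 t i * basis2 i w)
        = t [i] * f (word [i]) + coord2 t i * f (basis2 i)"
      by (simp only: lin_on_scalar_scale[OF f wi] lin_on_scalar_scale[OF f bi])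
  qed
  finally have B_eq: "f ?B = (\<Sum>i=1..7. t [i] * f (word [i]) + coord2 t i * f (basis2 i))" .
  have "f ?A = t [] * f (word [])" "f ?C = trace3 t * f omega"
    by (simp_all add: lin_on_scalar_scale[OF f] tens_word omega_tens)
  then show ?thesis
    by (simp only: split B_eq)
qed

definition pairing :: "(nat list \<Rightarrow> 'k::field) \<Rightarrow> (nat list \<Rightarrow> 'k) \<Rightarrow> 'k" where
  "pairing x = (\<lambda>t. if t \<in> tens then trace3 (tmul x t) else 0)"

lemma pairing_lin: "lin_on tens pairing"
  unfolding lin_on_def pairing_def vadd_def vsc_def
  by (simp add: fun_eq_iff tmul_add_left tmul_scale_left trace3_add trace3_scale)

lemma pairing_in_dual_space:
  assumes "x \<in> tens"
  shows "pairing x \<in> dual_space"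
  unfolding dual_space_def lin_on_scalar_def pairing_def vadd_def vsc_def
  using assms by (auto simp: tens_add tens_scale tmul_add_right tmul_scale_right trace3_add
      trace3_scale ideal_tens ideal_tmul_left trace3_ideal)

lemma dual_space_normal_form:
  assumes "f \<in> dual_space" "t \<in> tens"
  shows "f t = f (normal_form t)"
proof -
  have f: "lin_on_scalar tens f" and ideal: "\<And>y. y \<in> dual_ideal \<Longrightarrow> f y = 0"
    using assms(1) by (auto simp: dual_space_def)
  have d: "(\<lambda>w. t w - normal_form t w) \<in> dual_ideal"
    using cong_normal_form[OF assms(2)] by (simp add: cong_ideal_def)
  have "f t = f (\<lambda>w. (t w - normal_form t w) + normal_form t w)"
    by simp
  also have "\<dots> = f (\<lambda>w. t w - normal_form t w) + f (normal_form t)"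
    by (rule lin_on_scalar_add[OF f ideal_tens[OF d] normal_form_tens])
  finally show ?thesis
    using ideal[OF d] by simp
qed

definition pairing_preimage :: "((nat list \<Rightarrow> 'k::field) \<Rightarrow> 'k) \<Rightarrow> nat list \<Rightarrow> 'k" where
  "pairing_preimage f = (\<lambda>w. f (word []) * omega w
     + (\<Sum>i=1..7. f (word [i]) * basis2 i w + f (basis2 i) * word [i] w) + f omega * word [] w)"

lemma pairing_preimage_tens: "pairing_preimage f \<in> tens"
  unfolding pairing_preimage_def
  by (intro tens_add tens_scale tens_sum tens_word basis2_tens omega_tens) auto

lemma pairing_pairing_preimage:
  assumes "f \<in> dual_space"
  shows "pairing (pairing_preimage f) = f"
proof
  fix t
  show "pairing (pairing_preimage f) t = f t"
  proof (cases "t \<in> tens")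
    case False
    then show ?thesis
      using assms by (simp add: pairing_def dual_space_def)
  next
    case True
    have "trace3 (tmul (pairing_preimage f) t) = f (word []) * t []
        + (\<Sum>i=1..7. f (word [i]) * t [i] + f (basis2 i) * coord2 t i) + f omega * trace3 t"
      by (simp add: pairing_preimage_def tmul_add_left tmul_scale_left tmul_sum_left trace3_add
          trace3_scale trace3_sum trace3_tmul_omega trace3_tmul_basis2 trace3_tmul_word1
          trace3_tmul_word_Nil)
    also have "\<dots> = f (normal_form t)"
      using assms by (simp add: lin_on_scalar_normal_form dual_space_def mult.commute)
    also have "\<dots> = f t"
      using dual_space_normal_form[OF assms True] by simp
    finally show ?thesis
      using True by (simp add: pairing_def)
  qed
qed

lemma pairing_image: "pairing ` tens = dual_space"
proof
  show "pairing ` tens \<subseteq> dual_space"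
    using pairing_in_dual_space by auto
  show "dual_space \<subseteq> pairing ` tens"
    using pairing_pairing_preimage pairing_preimage_tens by (metis image_eqI subsetI)
qed

lemma pairing_eq_zero_iff:
  assumes "x \<in> tens"
  shows "pairing x = (\<lambda>_. 0) \<longleftrightarrow> x \<in> dual_ideal"
proof
  assume "x \<in> dual_ideal"
  then show "pairing x = (\<lambda>_. 0)"
    using ideal_tmul_right trace3_ideal by (auto simp: pairing_def fun_eq_iff)
next
  assume z: "pairing x = (\<lambda>_. 0)"
  have vanish: "trace3 (tmul t x) = 0" if "t \<in> tens" for t
    using fun_cong[OF z, of t] that by (simp add: pairing_def trace3_tmul_commute)
  have "x [] = 0"
    using vanish[OF omega_tens] by (simp add: trace3_tmul_omega)
  moreover have "x [i] = 0" if "i \<in> {1..7}" for i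
    using vanish[OF basis2_tens[OF that]] by (simp add: trace3_tmul_basis2[OF that])
  moreover have "coord2 x i = 0" for i
    using vanish[OF tens_word, of "[i]"] trace3_tmul_word1[of i x] coord2_outside[of i x]
    by (cases "i \<in> {1..7}") simp_all
  moreover have "trace3 x = 0"
    using vanish[OF tens_word, of "[]"] by (simp add: trace3_tmul_word_Nil)
  ultimately have "normal_form x = (\<lambda>_. 0)"
    by (simp add: normal_form_def)
  then show "x \<in> dual_ideal"
    using cong_normal_form[OF assms] by (simp add: cong_zero_iff)
qed

lemma pairing_tmul:
  assumes "a \<in> tens" "x \<in> tens" "b \<in> tens"
  shows "pairing (tmul (tmul a x) b) = dual_act a (pairing x) b"
proof
  fix t
  show "pairing (tmul (tmul a x) b) t = dual_act a (pairing x) b t"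
  proof (cases "t \<in> tens")
    case True
    have "trace3 (tmul (tmul (tmul a x) b) t) = trace3 (tmul a (tmul x (tmul b t)))"
      by (simp add: tmul_assoc)
    also have "\<dots> = trace3 (tmul (tmul x (tmul b t)) a)"
      by (rule trace3_tmul_commute)
    also have "\<dots> = trace3 (tmul x (tmul (tmul b t) a))"
      by (simp add: tmul_assoc)
    finally show ?thesis
      using True assms by (simp add: pairing_def dual_act_def tens_tmul)
  qed (simp add: pairing_def dual_act_def)
qed

lemma symmetric_frobenius: "symmetric_frobenius_dual TYPE('k::field)"
  unfolding symmetric_frobenius_dual_def
proof (intro conjI)
  show "\<exists>B :: (nat list \<Rightarrow> 'k) set. finite B \<and> B \<subseteq> tens \<and>
      (\<forall>x\<in>tens. \<exists>c. vadd x (vsc (-1) (\<lambda>w. \<Sum>b\<in>B. c b * b w)) \<in> dual_ideal)"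
    by (rule finite_spanning_set)
  show "\<exists>Phi :: (nat list \<Rightarrow> 'k) \<Rightarrow> ((nat list \<Rightarrow> 'k) \<Rightarrow> 'k).
      lin_on tens Phi \<and> Phi ` tens = dual_space \<and>
      (\<forall>x\<in>tens. Phi x = (\<lambda>_. 0) \<longleftrightarrow> x \<in> dual_ideal) \<and>
      (\<forall>a\<in>tens. \<forall>x\<in>tens. \<forall>b\<in>tens. Phi (tmul (tmul a x) b) = dual_act a (Phi x) b)"
    by (intro exI[of _ pairing]) (simp add: pairing_lin pairing_image pairing_eq_zero_iff pairing_tmul)
qed

section \<open>Comparison with the octonions\<close>

lemma tmul_thom1_deg2:
  assumes "u \<in> thom 1" "v \<in> thom 1"
  shows "tmul u v [r, s] = u [r] * v [s]"
  using thom_length[OF assms(1)] thom_length[OF assms(2)] by (simp add: tmul_deg2)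

lemma tmul_thom1_deg3:
  assumes "u \<in> thom 1" "v \<in> thom 1" "w \<in> thom 1"
  shows "tmul (tmul u v) w [r, s, i] = u [r] * v [s] * w [i]"
  using thom_length[OF assms(1)] thom_length[OF assms(2)] thom_length[OF assms(3)]
  by (simp add: tmul_Nil tmul_deg1 tmul_deg2 tmul_deg3)

lemma omult_to_oct_im:
  assumes "j \<in> {1..7}"
  shows "omult (to_oct u) (to_oct v) j = (\<Sum>r=1..7. \<Sum>s=1..7. of_int (eps r s j) * u [r] * v [s])"
  using assms by (simp add: omult_def to_oct_def)

lemma omult_re: "omult a b 0 = a 0 * b 0 - (\<Sum>r=1..7. a r * b r)"
  by (simp add: omult_def)

lemma coord2_tmul_thom1:
  assumes "(2::'k::field) \<noteq> 0" "u \<in> thom 1" "v \<in> thom 1"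
  shows "coord2 (tmul u v) = oim (omult (to_oct u) (to_oct v :: nat \<Rightarrow> 'k))"
proof
  fix j
  let ?z = "omult (to_oct u) (to_oct v :: nat \<Rightarrow> 'k)"
  have oim: "oim ?z j = (if j = 0 then 0 else ?z j)"
    using assms(1) by (simp add: oim_def vsc_def vadd_def oconj_def field_simps)
  show "coord2 (tmul u v) j = oim ?z j"
  proof (cases "j \<in> {1..7}")
    case True
    then show ?thesis
      using oim omult_to_oct_im[OF True, of u v]
      by (simp add: coord2_def tmul_thom1_deg2[OF assms(2,3)] mult.assoc)
  next
    case False
    have "?z j = 0" if "7 < j"
      using that by (simp add: omult_def)
    then show ?thesis
      using False oim coord2_outside[OF False] by (cases "j = 0") auto
  qed
qed

lemma trace3_tmul_thom1:
  assumes "(2::'k::field) \<noteq> 0" "u \<in> thom 1" "v \<in> thom 1" "w \<in> thom 1"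
  shows "trace3 (tmul (tmul u v) w) = - ore (omult (omult (to_oct u) (to_oct v)) (to_oct w :: nat \<Rightarrow> 'k))"
proof -
  let ?p = "omult (to_oct u) (to_oct v :: nat \<Rightarrow> 'k)"
  have "trace3 (tmul (tmul u v) w)
      = (\<Sum>r=1..7. \<Sum>s=1..7. \<Sum>i=1..7. of_int (eps r s i) * (u [r] * v [s] * w [i]))"
    by (simp add: trace3_def tmul_thom1_deg3[OF assms(2-4)])
  also have "\<dots> = (\<Sum>i=1..7. \<Sum>r=1..7. \<Sum>s=1..7. of_int (eps r s i) * (u [r] * v [s] * w [i]))"
    by (rule sum_rotate3)
  also have "\<dots> = (\<Sum>i=1..7. ?p i * w [i])"
    by (simp add: omult_to_oct_im sum_distrib_left sum_distrib_right mult_ac)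
  also have "\<dots> = - omult ?p (to_oct w) 0"
    by (simp add: omult_re to_oct_def)
  also have "\<dots> = - ore (omult ?p (to_oct w))"
    using assms(1) by (simp add: ore_def vadd_def oconj_def field_simps)
  finally show ?thesis .
qed

lemma degree2_identification:
  assumes "(2::'k::field) \<noteq> 0"
  shows "\<exists>phi2 :: (nat list \<Rightarrow> 'k) \<Rightarrow> (nat \<Rightarrow> 'k).
    lin_on (thom 2) phi2 \<and> phi2 ` thom 2 = im_octs \<and>
    (\<forall>x\<in>thom 2. phi2 x = (\<lambda>_. 0) \<longleftrightarrow> x \<in> dual_ideal) \<and>
    (\<forall>u\<in>thom 1. \<forall>v\<in>thom 1. phi2 (tmul u v) = oim (omult (to_oct u) (to_oct v)))"
proof (intro exI[of _ coord2] conjI ballI)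
  show "lin_on (thom 2) (coord2 :: (nat list \<Rightarrow> 'k) \<Rightarrow> _)"
    by (simp add: lin_on_def vadd_def vsc_def coord2_add coord2_scale)
  show "coord2 ` thom 2 = (im_octs :: (nat \<Rightarrow> 'k) set)"
  proof
    show "coord2 ` thom 2 \<subseteq> (im_octs :: (nat \<Rightarrow> 'k) set)"
      by (auto simp: im_octs_def octs_def coord2_outside)
    show "im_octs \<subseteq> coord2 ` (thom 2 :: (nat list \<Rightarrow> 'k) set)"
    proof
      fix u :: "nat \<Rightarrow> 'k"
      assume "u \<in> im_octs"
      then have "u = coord2 (\<lambda>w. \<Sum>i=1..7. u i * basis2 i w)"
        unfolding coord2_span2 by (auto simp: im_octs_def octs_def fun_eq_iff Suc_le_eq)
      then show "u \<in> coord2 ` thom 2"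
        by (rule rev_image_eqI[OF span2_thom])
    qed
  qed
  show "coord2 x = (\<lambda>_. 0) \<longleftrightarrow> x \<in> dual_ideal" if "x \<in> thom 2" for x :: "nat list \<Rightarrow> 'k"
    using that Rperp_iff Rperp_subset_ideal coord2_ideal by auto
  show "coord2 (tmul u v) = oim (omult (to_oct u) (to_oct v))" if "u \<in> thom 1" "v \<in> thom 1"
    for u v :: "nat list \<Rightarrow> 'k"
    using assms that by (rule coord2_tmul_thom1)
qed

lemma degree3_identification:
  assumes "(2::'k::field) \<noteq> 0"
  shows "\<exists>phi3 :: (nat list \<Rightarrow> 'k) \<Rightarrow> 'k.
    lin_on_scalar (thom 3) phi3 \<and> phi3 ` thom 3 = UNIV \<and>
    (\<forall>x\<in>thom 3. phi3 x = 0 \<longleftrightarrow> x \<in> dual_ideal) \<and>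
    (\<forall>u\<in>thom 1. \<forall>v\<in>thom 1. \<forall>w\<in>thom 1.
       phi3 (tmul (tmul u v) w) = - ore (omult (omult (to_oct u) (to_oct v)) (to_oct w)))"
proof (intro exI[of _ trace3] conjI ballI)
  show "lin_on_scalar (thom 3) (trace3 :: (nat list \<Rightarrow> 'k) \<Rightarrow> _)"
    by (simp add: lin_on_scalar_def vadd_def vsc_def trace3_add trace3_scale)
  have "y \<in> trace3 ` thom 3" for y :: 'k
  proof
    show "(\<lambda>w. y * omega w) \<in> thom 3"
      by (simp add: omega_def thom_scale thom_word)
    show "y = trace3 (\<lambda>w. y * omega w)"
      by (simp add: omega_def trace3_scale trace3_word eps_def directed_def fano_lines_def)
  qed
  then show "trace3 ` thom 3 = (UNIV :: 'k set)"
    by blast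
  show "trace3 x = 0 \<longleftrightarrow> x \<in> dual_ideal" if "x \<in> thom 3" for x :: "nat list \<Rightarrow> 'k"
    using deg3_cong[OF that] trace3_ideal by (auto simp: cong_zero_iff)
  show "trace3 (tmul (tmul u v) w) = - ore (omult (omult (to_oct u) (to_oct v)) (to_oct w))"
    if "u \<in> thom 1" "v \<in> thom 1" "w \<in> thom 1" for u v w :: "nat list \<Rightarrow> 'k"
    using assms that by (rule trace3_tmul_thom1)
qed

theorem proposition5p3:
  assumes char: "(2::'k::field) \<noteq> 0"
  shows
    "(\<exists>phi2 :: (nat list \<Rightarrow> 'k) \<Rightarrow> (nat \<Rightarrow> 'k).
        lin_on (thom 2) phi2 \<and> phi2 ` thom 2 = im_octs \<and>
        (\<forall>x\<in>thom 2. phi2 x = (\<lambda>_. 0) \<longleftrightarrow> x \<in> dual_ideal) \<and>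
        (\<forall>u\<in>thom 1. \<forall>v\<in>thom 1. phi2 (tmul u v) = oim (omult (to_oct u) (to_oct v))))
   \<and> (\<exists>phi3 :: (nat list \<Rightarrow> 'k) \<Rightarrow> 'k.
        lin_on_scalar (thom 3) phi3 \<and> phi3 ` thom 3 = UNIV \<and>
        (\<forall>x\<in>thom 3. phi3 x = 0 \<longleftrightarrow> x \<in> dual_ideal) \<and>
        (\<forall>u\<in>thom 1. \<forall>v\<in>thom 1. \<forall>w\<in>thom 1.
           phi3 (tmul (tmul u v) w) = - ore (omult (omult (to_oct u) (to_oct v)) (to_oct w))))
   \<and> symmetric_frobenius_dual TYPE('k)"
  by (intro conjI degree2_identification[OF char] degree3_identification[OF char] symmetric_frobenius)

end
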